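(* Let $R=\mathbb{Z}[a]$, let $\Gamma$ be the ring defined below, and let \[ \Psi = Q_0Q_0 +a\,Q_0Q_1 -2\,Q_1Q_1 +a^2\,Q_0Q_2 -2a\,Q_1Q_2 +4\,Q_2Q_2\in\Gamma. \] Then $\Psi$ lies in the center of $\Gamma$.
   Context: $R=\mathbb{Z}[a]$ is a polynomial ring. $\Gamma$ is the associative ring equipped with a ring homomorphism $\eta\colon R\to\Gamma$, generated over $R$ by $Q_0,Q_1,Q_2$ subject to: (i) commutation relations: the $Q_i$ commute with elements of $\mathbb{Z}\subset R$, and $Q_0\,a = a^2Q_0-2aQ_1+6Q_2$, $Q_1\,a=3Q_0+aQ_2$, $Q_2\,a=-aQ_0+3Q_1$; (ii) adem relations: $Q_1Q_0=2Q_2Q_1-2Q_0Q_2$ and $Q_2Q_0=Q_0Q_1+aQ_0Q_2-2Q_1Q_2$. *)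

theory Defs
  imports Main
begin

inductive_set gen_ring :: "'a::ring_1 set \<Rightarrow> 'a set" for S :: "'a set" where
  gen_base: "x \<in> S \<Longrightarrow> x \<in> gen_ring S"
| gen_one: "1 \<in> gen_ring S"
| gen_add: "x \<in> gen_ring S \<Longrightarrow> y \<in> gen_ring S \<Longrightarrow> x + y \<in> gen_ring S"
| gen_neg: "x \<in> gen_ring S \<Longrightarrow> - x \<in> gen_ring S"
| gen_mult: "x \<in> gen_ring S \<Longrightarrow> y \<in> gen_ring S \<Longrightarrow> x * y \<in> gen_ring S"

definition ring_center :: "'a::ring_1 set" where
  "ring_center = {z. \<forall>x. z * x = x * z}"

end

theory Submission
  imports Defs
begin

text \<open>The centralizer of \<open>\<Psi>\<close> is a subring, so it suffices that \<open>\<Psi>\<close> commutes with the generators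
  \<open>a, Q\<^sub>0, Q\<^sub>1, Q\<^sub>2\<close>. Each of these four identities is a finite computation: reading the
  commutation and Adem relations as rewrite rules that move \<open>a\<close> to the left and remove the
  factors \<open>Q\<^sub>1Q\<^sub>0\<close> and \<open>Q\<^sub>2Q\<^sub>0\<close>, both sides reduce to the same combination of normal words.\<close>

definition psi :: "'a::ring_1 \<Rightarrow> 'a \<Rightarrow> 'a \<Rightarrow> 'a \<Rightarrow> 'a" where
  "psi A Q0 Q1 Q2 = Q0 * Q0 + A * Q0 * Q1 - 2 * Q1 * Q1 + A^2 * Q0 * Q2 - 2 * A * Q1 * Q2
                      + 4 * Q2 * Q2"

lemma commute_gen_ring:
  fixes z :: "'a::ring_1"
  assumes "\<And>s. s \<in> S \<Longrightarrow> z * s = s * z"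
  shows "x \<in> gen_ring S \<Longrightarrow> z * x = x * z"
proof (induction rule: gen_ring.induct)
  case (gen_base x)
  then show ?case using assms by blast
next
  case gen_one
  then show ?case by simp
next
  case (gen_add x y)
  then show ?case by (simp add: algebra_simps)
next
  case (gen_neg x)
  then show ?case by simp
next
  case (gen_mult x y)
  then show ?case by (metis mult.assoc)
qed

lemma mult_assoc_rewrite: "a * b = c \<Longrightarrow> a * (b * x) = c * (x::'a::semigroup_mult)"
  by (metis mult.assoc)

lemma numeral_mult_left_commute: "numeral n * ((x::'a::ring_1) * y) = x * (numeral n * y)"
  by (metis mult.assoc mult_of_nat_commute of_nat_numeral)

lemma add_mult_minus_right_cancel:
  fixes x y n r :: "'a::ring_1"
  assumes "n = - y"
  shows "x * n + x * y = 0" "x * y + x * n = 0" "x * n + (x * y + r) = r" "x * y + (x * n + r) = r"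
  using assms by (simp_all add: algebra_simps)

lemma psi_commutes_with_generators:
  fixes A Q0 Q1 Q2 :: "'g::ring_1"
  assumes comm0: "Q0 * A = A^2 * Q0 - 2 * A * Q1 + 6 * Q2"
    and comm1: "Q1 * A = 3 * Q0 + A * Q2"
    and comm2: "Q2 * A = - A * Q0 + 3 * Q1"
    and adem1: "Q1 * Q0 = 2 * Q2 * Q1 - 2 * Q0 * Q2"
    and adem2: "Q2 * Q0 = Q0 * Q1 + A * Q0 * Q2 - 2 * Q1 * Q2"
    and s: "s \<in> {A, Q0, Q1, Q2}"
  shows "psi A Q0 Q1 Q2 * s = s * psi A Q0 Q1 Q2"
proof -
  have "psi A Q0 Q1 Q2 * (s * y) - s * (psi A Q0 Q1 Q2 * y) = 0" for y
  proof -
    define n where "n = - y"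
    have minus_y: "- y = n" and minus_n: "- n = y" by (simp_all add: n_def)
    text \<open>The right factor \<open>y\<close> lets the relations, read as rules \<open>Q * (b * x) = c * x\<close>,
      also fire at the end of a word, and \<open>n = - y\<close> keeps signs inside the words. Both sides
      become sums of right-associated words ending in \<open>y\<close> or \<open>n\<close>, numerals unfolded into
      repeated summands; after reassociating to the left and sorting the sum, each word times
      \<open>n\<close> sits next to the same word times \<open>y\<close> and the two cancel.\<close>
    from s show ?thesis
      apply (elim insertE emptyE)
      apply (simp_all only: psi_def power2_eq_square)
      apply (simp_all only: distrib_left distrib_right diff_conv_add_uminus minus_add_distrib
          minus_minus mult_minus_left mult_minus_right[symmetric] mult.assoc
          comm0[unfolded power2_eq_square, THEN mult_assoc_rewrite]
          comm1[THEN mult_assoc_rewrite] comm2[THEN mult_assoc_rewrite]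
          adem1[THEN mult_assoc_rewrite] adem2[THEN mult_assoc_rewrite]
          numeral_mult_left_commute mult_numeral_left_semiring_numeral mult_num_simps
          minus_y minus_n numeral_Bit0 numeral_Bit1 numeral_One mult_1_left)
      apply (simp_all only: mult.assoc[symmetric])
      apply (simp_all only: add_ac add_mult_minus_right_cancel[OF n_def] add_0_left add_0_right)
      done
  qed
  from this[of 1] show ?thesis by simp
qed

theorem mainTheorem2:
  fixes A Q0 Q1 Q2 :: "'g::ring_1"
  assumes comm0: "Q0 * A = A^2 * Q0 - 2 * A * Q1 + 6 * Q2"
    and comm1: "Q1 * A = 3 * Q0 + A * Q2"
    and comm2: "Q2 * A = - A * Q0 + 3 * Q1"
    and adem1: "Q1 * Q0 = 2 * Q2 * Q1 - 2 * Q0 * Q2"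
    and adem2: "Q2 * Q0 = Q0 * Q1 + A * Q0 * Q2 - 2 * Q1 * Q2"
    and generated: "gen_ring {A, Q0, Q1, Q2} = UNIV"
  shows "Q0 * Q0 + A * Q0 * Q1 - 2 * Q1 * Q1 + A^2 * Q0 * Q2 - 2 * A * Q1 * Q2
           + 4 * Q2 * Q2 \<in> ring_center"
proof -
  have "psi A Q0 Q1 Q2 * s = s * psi A Q0 Q1 Q2" if "s \<in> {A, Q0, Q1, Q2}" for s
    using psi_commutes_with_generators[OF comm0 comm1 comm2 adem1 adem2 that] .
  then have "psi A Q0 Q1 Q2 * x = x * psi A Q0 Q1 Q2" for x
    using commute_gen_ring generated by blast
  then show ?thesis by (simp add: ring_center_def psi_def)
qed

end
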